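(* Let $\lambda=(\lambda_1,\dots,\lambda_l)$ and $\mu=(\mu_1,\dots,\mu_m)$ be decompositions of $n$ (all parts positive) with $\mu_m\le\lambda_l$. Then $$|P_{\lambda|\mu}|=2^{\mu_m(\lambda_l-\mu_m)}\,|\mathrm{GL}_{\mu_m}(\mathbb{F}_2)|\cdot|P_{\widetilde\lambda|\widetilde\mu}|,$$ where $\widetilde\lambda=(\lambda_1,\dots,\lambda_{l-1},\lambda_l-\mu_m)$ and $\widetilde\mu=(\mu_1,\dots,\mu_{m-1})$, both decompositions of $n-\mu_m$.
   Context: For a decomposition $\lambda=(\lambda_1,\dots,\lambda_l)$ of $N$ (zero parts are omitted; the empty decomposition is the decomposition of $0$, with $\mathrm{GL}_0$ and all associated groups trivial), $P_\lambda\le\mathrm{GL}_N(\mathbb{F}_2)$ is the standard parabolic subgroup of invertible block upper triangular matrices with diagonal blocks of sizes $\lambda_1,\dots,\lambda_l$ in this order. $P_\mu^t$ is the group of transposes of elements of $P_\mu$, and $P_{\lambda|\mu}=P_\lambda\cap P_\mu^t$ for decompositions $\lambda,\mu$ of the same $N$. *)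

theory Defs
  imports "Jordan_Normal_Form.Matrix" "HOL-Library.Z2"
begin

definition is_decomp :: "nat \<Rightarrow> nat list \<Rightarrow> bool" where
  "is_decomp n ds \<longleftrightarrow> sum_list ds = n \<and> (\<forall>x\<in>set ds. 0 < x)"

definition GL2 :: "nat \<Rightarrow> bit mat set" where
  "GL2 N = {A \<in> carrier_mat N N. invertible_mat A}"

text \<open>Index (0-based) of the diagonal block containing row/column i.\<close>
definition blk :: "nat list \<Rightarrow> nat \<Rightarrow> nat" where
  "blk ds i = card {k. k < length ds \<and> sum_list (take (Suc k) ds) \<le> i}"

definition parabolic :: "nat list \<Rightarrow> bit mat set" where
  "parabolic ds = {A \<in> GL2 (sum_list ds).
     \<forall>i < sum_list ds. \<forall>j < sum_list ds. blk ds j < blk ds i \<longrightarrow> A $$ (i, j) = 0}"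

definition parabolic_t :: "nat list \<Rightarrow> bit mat set" where
  "parabolic_t ds = transpose_mat ` parabolic ds"

definition parabolic_mix :: "nat list \<Rightarrow> nat list \<Rightarrow> bit mat set" where
  "parabolic_mix la mu = parabolic la \<inter> parabolic_t mu"

end

theory Submission
  imports Defs "Jordan_Normal_Form.Determinant"
begin

text \<open>Split rows and columns after the first \<open>k = n - \<mu>\<^sub>m\<close> indices. The transposed-parabolic
  condition for \<open>\<mu>\<close> kills the upper right block, so every matrix in \<open>P\<^bsub>\<lambda>|\<mu>\<^esub>\<close> has the form
  \<open>[[B, 0], [C, D]]\<close>, and \<open>det A = det B * det D\<close>. The block \<open>B\<close> ranges over
  \<open>P\<^bsub>\<lambda>'|\<mu>'\<^esub>\<close> for the shortened decompositions and \<open>D\<close> over \<open>GL\<^bsub>\<mu>\<^sub>m\<^esub>\<close>. Since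
  \<open>\<mu>\<^sub>m \<le> \<lambda>\<^sub>l\<close>, the last \<open>\<mu>\<^sub>m\<close> rows lie in the last \<open>\<lambda>\<close>-block, so \<open>C\<close> is only required
  to vanish on the columns before that block and has \<open>\<mu>\<^sub>m (\<lambda>\<^sub>l - \<mu>\<^sub>m)\<close> free entries.\<close>

lemma card_UNIV_bit: "card (UNIV :: bit set) = 2"
proof -
  have "UNIV = {0 :: bit, 1}" by (auto intro: bit.exhaust)
  then show ?thesis by (metis card_2_iff zero_neq_one)
qed

lemma invertible_mat_iff_det:
  assumes A: "(A :: 'a :: field mat) \<in> carrier_mat n n"
  shows "invertible_mat A \<longleftrightarrow> det A \<noteq> 0"
proof
  assume "invertible_mat A"
  then obtain B where AB: "A * B = 1\<^sub>m n" and BA: "B * A = 1\<^sub>m (dim_row B)"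
    using A unfolding invertible_mat_def inverts_mat_def by auto
  have B: "B \<in> carrier_mat n n"
    using arg_cong[OF AB, of dim_col] arg_cong[OF BA, of dim_col] A by auto
  have "det A * det B = 1" using arg_cong[OF AB, of det] det_mult[OF A B] by simp
  then show "det A \<noteq> 0" by auto
next
  assume "det A \<noteq> 0"
  from det_non_zero_imp_unit[OF A this, of "()"]
  obtain B where "B \<in> carrier_mat n n" "B * A = 1\<^sub>m n" "A * B = 1\<^sub>m n"
    unfolding Units_def ring_mat_def by auto
  with A show "invertible_mat A"
    unfolding invertible_mat_def inverts_mat_def by auto
qed

lemma GL2_iff: "A \<in> GL2 N \<longleftrightarrow> A \<in> carrier_mat N N \<and> det A \<noteq> 0"
  unfolding GL2_def using invertible_mat_iff_det by blast

lemma parabolic_iff: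
  "A \<in> parabolic ds \<longleftrightarrow> A \<in> GL2 (sum_list ds) \<and>
     (\<forall>i < sum_list ds. \<forall>j < sum_list ds. blk ds j < blk ds i \<longrightarrow> A $$ (i, j) = 0)"
  unfolding parabolic_def by blast

lemma parabolic_t_iff:
  "A \<in> parabolic_t ds \<longleftrightarrow> A \<in> GL2 (sum_list ds) \<and>
     (\<forall>i < sum_list ds. \<forall>j < sum_list ds. blk ds i < blk ds j \<longrightarrow> A $$ (i, j) = 0)"
proof -
  have "A \<in> parabolic_t ds \<longleftrightarrow> transpose_mat A \<in> parabolic ds"
    unfolding parabolic_t_def by (metis image_eqI transpose_transpose imageE)
  moreover have "transpose_mat A \<in> GL2 N \<longleftrightarrow> A \<in> GL2 N" for N
    unfolding GL2_iff by (metis det_transpose transpose_carrier_mat)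
  ultimately show ?thesis
    unfolding parabolic_iff by (auto simp: GL2_iff)
qed

lemma parabolic_mix_subset_carrier: "parabolic_mix la mu \<subseteq> carrier_mat (sum_list la) (sum_list la)"
  unfolding parabolic_mix_def parabolic_def GL2_def by auto

lemma parabolic_mix_iff:
  assumes "sum_list la = N" "sum_list mu = N"
  shows "A \<in> parabolic_mix la mu \<longleftrightarrow> A \<in> carrier_mat N N \<and> det A \<noteq> 0 \<and>
     (\<forall>i < N. \<forall>j < N. blk la j < blk la i \<longrightarrow> A $$ (i, j) = 0) \<and>
     (\<forall>i < N. \<forall>j < N. blk mu i < blk mu j \<longrightarrow> A $$ (i, j) = 0)"
  unfolding parabolic_mix_def Int_iff parabolic_iff parabolic_t_iff GL2_iff using assms by auto

lemma sum_list_take_le: "sum_list (take k (xs :: nat list)) \<le> sum_list xs"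
  by (metis append_take_drop_id le_add1 sum_list_append)

lemma blk_append:
  assumes "i < sum_list xs"
  shows "blk (xs @ ys) i = blk xs i"
proof -
  have "sum_list (take (Suc k) (xs @ ys)) \<le> i \<longleftrightarrow> k < length xs \<and> sum_list (take (Suc k) xs) \<le> i"
    if "k < length (xs @ ys)" for k
    using assms by (cases "k < length xs") auto
  then have "{k. k < length (xs @ ys) \<and> sum_list (take (Suc k) (xs @ ys)) \<le> i}
      = {k. k < length xs \<and> sum_list (take (Suc k) xs) \<le> i}"
    by auto
  then show ?thesis unfolding blk_def by simp
qed

lemma blk_less_length:
  assumes "i < sum_list xs"
  shows "blk xs i < length xs"
proof -
  have "{k. k < length xs \<and> sum_list (take (Suc k) xs) \<le> i} \<subseteq> {..<length xs - 1}"
  proof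
    fix k assume k: "k \<in> {k. k < length xs \<and> sum_list (take (Suc k) xs) \<le> i}"
    then have "Suc k \<noteq> length xs" using assms by auto
    then show "k \<in> {..<length xs - 1}" using k by auto
  qed
  from card_mono[OF _ this] have "blk xs i \<le> length xs - 1" unfolding blk_def by simp
  moreover have "xs \<noteq> []" using assms by auto
  ultimately show ?thesis by (cases xs) auto
qed

lemma blk_snoc:
  assumes "sum_list xs \<le> i" "i < sum_list xs + x"
  shows "blk (xs @ [x]) i = length xs"
proof -
  have "{k. k < length (xs @ [x]) \<and> sum_list (take (Suc k) (xs @ [x])) \<le> i} = {..<length xs}"
    using assms by (auto simp: less_Suc_eq intro: order_trans[OF sum_list_take_le])
  then show ?thesis unfolding blk_def by simp
qed

lemma inj_on_four_block_mat_zero_upper_right: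
  "inj_on (\<lambda>(B, C, D). four_block_mat B (0\<^sub>m r1 c2) C D)
     (carrier_mat r1 c1 \<times> carrier_mat r2 c1 \<times> carrier_mat r2 c2)"
proof (rule inj_onI)
  fix x y
  assume "x \<in> carrier_mat r1 c1 \<times> carrier_mat r2 c1 \<times> carrier_mat r2 c2"
    and "y \<in> carrier_mat r1 c1 \<times> carrier_mat r2 c1 \<times> carrier_mat r2 c2"
    and "(\<lambda>(B, C, D). four_block_mat B (0\<^sub>m r1 c2) C D) x
       = (\<lambda>(B, C, D). four_block_mat B (0\<^sub>m r1 c2) C D) y"
  then obtain B C D B' C' D' where xy: "x = (B, C, D)" "y = (B', C', D')"
    and carriers: "B \<in> carrier_mat r1 c1" "C \<in> carrier_mat r2 c1" "D \<in> carrier_mat r2 c2"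
      "B' \<in> carrier_mat r1 c1" "C' \<in> carrier_mat r2 c1" "D' \<in> carrier_mat r2 c2"
    and eq: "four_block_mat B (0\<^sub>m r1 c2) C D = four_block_mat B' (0\<^sub>m r1 c2) C' D'"
    by auto
  have entry: "four_block_mat B (0\<^sub>m r1 c2) C D $$ (i, j) = four_block_mat B' (0\<^sub>m r1 c2) C' D' $$ (i, j)"
    for i j using eq by simp
  have "B = B'"
  proof (rule eq_matI)
    fix i j assume "i < dim_row B'" "j < dim_col B'"
    then show "B $$ (i, j) = B' $$ (i, j)" using entry[of i j] carriers by auto
  qed (use carriers in auto)
  moreover have "C = C'"
  proof (rule eq_matI)
    fix i j assume "i < dim_row C'" "j < dim_col C'"
    then show "C $$ (i, j) = C' $$ (i, j)" using entry[of "r1 + i" j] carriers by auto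
  qed (use carriers in auto)
  moreover have "D = D'"
  proof (rule eq_matI)
    fix i j assume "i < dim_row D'" "j < dim_col D'"
    then show "D $$ (i, j) = D' $$ (i, j)" using entry[of "r1 + i" "c1 + j"] carriers by auto
  qed (use carriers in auto)
  ultimately show "x = y" using xy by simp
qed

lemma four_block_mat_zero_upper_right_cases:
  assumes A: "A \<in> carrier_mat (r1 + r2) (c1 + c2)"
    and zero: "\<And>i j. i < r1 \<Longrightarrow> j < c2 \<Longrightarrow> A $$ (i, c1 + j) = 0"
  obtains B C D where "B \<in> carrier_mat r1 c1" "C \<in> carrier_mat r2 c1" "D \<in> carrier_mat r2 c2"
    and "A = four_block_mat B (0\<^sub>m r1 c2) C D"
proof -
  obtain B Z C D where split: "split_block A r1 c1 = (B, Z, C, D)"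
    by (metis prod_cases4)
  note blocks = split_block[OF split, of r2 c2] A
  have "Z = 0\<^sub>m r1 c2"
    using split zero A unfolding split_block_def Let_def by (auto simp: add.commute)
  with blocks that show ?thesis by auto
qed

lemma det_four_block_mat_zero_upper_right_nonzero_iff:
  fixes B :: "'a :: idom mat"
  assumes "B \<in> carrier_mat k k" "C \<in> carrier_mat a k" "D \<in> carrier_mat a a"
  shows "det (four_block_mat B (0\<^sub>m k a) C D) \<noteq> 0 \<longleftrightarrow> det B \<noteq> 0 \<and> det D \<noteq> 0"
  using det_four_block_mat_upper_right_zero[OF assms(1) refl assms(2,3)] by simp

lemma card_mat_zero_left_cols:
  assumes "p \<le> c"
  shows "card {C \<in> carrier_mat r c. \<forall>i<r. \<forall>j<p. C $$ (i, j) = (0 :: 'a :: zero)}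
    = card (UNIV :: 'a set) ^ (r * (c - p))"
proof -
  let ?D = "{..<r} \<times> {p..<c}"
  let ?F = "?D \<rightarrow>\<^sub>E (UNIV :: 'a set)"
  define g :: "(nat \<times> nat \<Rightarrow> 'a) \<Rightarrow> 'a mat" where
    "g f = mat r c (\<lambda>(i, j). if p \<le> j then f (i, j) else 0)" for f
  have "inj_on g ?F"
  proof (rule inj_onI)
    fix f f' assume f: "f \<in> ?F" and f': "f' \<in> ?F" and eq: "g f = g f'"
    show "f = f'"
    proof (rule PiE_ext[OF f f'])
      fix x assume "x \<in> ?D"
      then obtain i j where "x = (i, j)" "i < r" "p \<le> j" "j < c" by auto
      then show "f x = f' x" using arg_cong[OF eq, of "\<lambda>M. M $$ (i, j)"] unfolding g_def by simp
    qed
  qed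
  moreover have "g ` ?F = {C \<in> carrier_mat r c. \<forall>i<r. \<forall>j<p. C $$ (i, j) = 0}"
  proof (intro equalityI subsetI)
    fix C assume "C \<in> g ` ?F"
    moreover have "j < p \<Longrightarrow> j < c" for j using assms by simp
    ultimately show "C \<in> {C \<in> carrier_mat r c. \<forall>i<r. \<forall>j<p. C $$ (i, j) = 0}"
      unfolding g_def by auto
  next
    fix C :: "'a mat" assume C: "C \<in> {C \<in> carrier_mat r c. \<forall>i<r. \<forall>j<p. C $$ (i, j) = 0}"
    let ?f = "restrict (\<lambda>x. C $$ x) ?D"
    have "?f \<in> ?F" by auto
    moreover have "g ?f = C"
      using C unfolding g_def by (intro eq_matI) auto
    ultimately show "C \<in> g ` ?F" by (metis image_eqI)
  qed
  moreover have "card ?F = card (UNIV :: 'a set) ^ (r * (c - p))"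
    by (simp add: card_PiE card_cartesian_product)
  ultimately show ?thesis by (metis card_image)
qed

text \<open>The decompositions are \<open>la' @ [L]\<close> and \<open>mu' @ [a]\<close>; \<open>k\<close> is the size of the block \<open>B\<close>.\<close>

locale last_block_split =
  fixes la' mu' :: "nat list" and L a :: nat
  assumes la'_pos: "\<forall>x\<in>set la'. 0 < x"
    and a_le_L: "a \<le> L"
    and sum_list_eq: "sum_list la' + L = sum_list mu' + a"
begin

definition k :: nat where "k = sum_list mu'"

definition la_tilde :: "nat list" where "la_tilde = filter (\<lambda>x. 0 < x) (la' @ [L - a])"

abbreviation block_lower_triangular :: "bit mat \<times> bit mat \<times> bit mat \<Rightarrow> bit mat" where
  "block_lower_triangular \<equiv> \<lambda>(B, C, D). four_block_mat B (0\<^sub>m k a) C D"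

definition lower_left_blocks :: "bit mat set" where
  "lower_left_blocks = {C \<in> carrier_mat a k. \<forall>i<a. \<forall>j<sum_list la'. C $$ (i, j) = 0}"

lemma sum_list_la'_le: "sum_list la' \<le> k"
  using sum_list_eq a_le_L unfolding k_def by linarith

lemma sum_list_snoc:
  "sum_list (la' @ [L]) = k + a" "sum_list (mu' @ [a]) = k + a"
  using sum_list_eq unfolding k_def by simp_all

lemma la_tilde_eq: "la_tilde = la' @ filter (\<lambda>x. 0 < x) [L - a]"
  using la'_pos unfolding la_tilde_def by (simp add: filter_True)

lemma sum_list_la_tilde: "sum_list la_tilde = k"
  using sum_list_eq a_le_L unfolding la_tilde_eq k_def by auto

lemma blk_la_tilde: "i < k \<Longrightarrow> blk la_tilde i = blk (la' @ [L]) i"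
proof (cases "i < sum_list la'")
  case True
  then show ?thesis using blk_append[of i la'] la_tilde_eq by metis
next
  case False
  assume "i < k"
  then have "la_tilde = la' @ [L - a]" using False sum_list_eq unfolding la_tilde_eq k_def by auto
  moreover have "blk (la' @ [L - a]) i = length la'" "blk (la' @ [L]) i = length la'"
    using False \<open>i < k\<close> sum_list_eq a_le_L unfolding k_def by (auto intro!: blk_snoc)
  ultimately show ?thesis by simp
qed

lemma blk_la_init: "j < sum_list la' \<Longrightarrow> blk (la' @ [L]) j < length la'"
  using blk_append blk_less_length by metis

lemma blk_la_last: "sum_list la' \<le> i \<Longrightarrow> i < k + a \<Longrightarrow> blk (la' @ [L]) i = length la'"
  using sum_list_eq unfolding k_def by (auto intro: blk_snoc)

lemma blk_mu_init: "i < k \<Longrightarrow> blk (mu' @ [a]) i = blk mu' i"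
  unfolding k_def by (rule blk_append)

lemma blk_mu_last: "k \<le> i \<Longrightarrow> i < k + a \<Longrightarrow> blk (mu' @ [a]) i = length mu'"
  unfolding k_def by (rule blk_snoc)

lemma blk_mu_le_length: "i < k + a \<Longrightarrow> blk (mu' @ [a]) i \<le> length mu'"
  using blk_mu_init blk_mu_last blk_less_length[of _ mu'] unfolding k_def
  by (metis less_imp_le not_le)

lemma four_block_parabolic_zeros_iff:
  assumes B: "B \<in> carrier_mat k k" and C: "C \<in> carrier_mat a k" and D: "D \<in> carrier_mat a a"
  shows "(\<forall>i < k + a. \<forall>j < k + a. blk (la' @ [L]) j < blk (la' @ [L]) i \<longrightarrow>
            four_block_mat B (0\<^sub>m k a) C D $$ (i, j) = 0)
    \<longleftrightarrow> (\<forall>i < k. \<forall>j < k. blk la_tilde j < blk la_tilde i \<longrightarrow> B $$ (i, j) = 0) \<and> C \<in> lower_left_blocks"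
    (is "?A \<longleftrightarrow> ?B \<and> _")
proof
  assume A: ?A
  have "B $$ (i, j) = 0" if "i < k" "j < k" "blk la_tilde j < blk la_tilde i" for i j
    using A[rule_format, of i j] that B D by (simp add: blk_la_tilde)
  moreover have "C $$ (i, j) = 0" if "i < a" "j < sum_list la'" for i j
  proof -
    have "blk (la' @ [L]) j < blk (la' @ [L]) (k + i)"
      using that sum_list_la'_le by (simp add: blk_la_init blk_la_last)
    then show ?thesis using A[rule_format, of "k + i" j] that sum_list_la'_le B D by simp
  qed
  ultimately show "?B \<and> C \<in> lower_left_blocks" using C unfolding lower_left_blocks_def by blast
next
  assume "?B \<and> C \<in> lower_left_blocks"
  then have zB: ?B and zC: "\<And>i j. i < a \<Longrightarrow> j < sum_list la' \<Longrightarrow> C $$ (i, j) = 0"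
    unfolding lower_left_blocks_def by blast+
  show ?A
  proof (intro allI impI)
    fix i j assume ij: "i < k + a" "j < k + a" and lt: "blk (la' @ [L]) j < blk (la' @ [L]) i"
    consider "i < k" "j < k" | "i < k" "k \<le> j" | "k \<le> i" "j < sum_list la'"
      | "k \<le> i" "sum_list la' \<le> j"
      by linarith
    then show "four_block_mat B (0\<^sub>m k a) C D $$ (i, j) = 0"
    proof cases
      case 1 then show ?thesis using zB lt B D by (simp add: blk_la_tilde)
    next
      case 2 then show ?thesis using ij B D by simp
    next
      case 3 then show ?thesis using ij zC[of "i - k" j] sum_list_la'_le B D by simp
    next
      case 4 then show ?thesis using ij lt sum_list_la'_le by (simp add: blk_la_last)
    qed
  qed
qed

lemma four_block_parabolic_t_zeros_iff:
  assumes B: "B \<in> carrier_mat k k" and C: "C \<in> carrier_mat a k" and D: "D \<in> carrier_mat a a"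
  shows "(\<forall>i < k + a. \<forall>j < k + a. blk (mu' @ [a]) i < blk (mu' @ [a]) j \<longrightarrow>
            four_block_mat B (0\<^sub>m k a) C D $$ (i, j) = 0)
    \<longleftrightarrow> (\<forall>i < k. \<forall>j < k. blk mu' i < blk mu' j \<longrightarrow> B $$ (i, j) = 0)"
    (is "?A \<longleftrightarrow> ?B")
proof
  assume A: ?A
  show ?B
  proof (intro allI impI)
    fix i j assume "i < k" "j < k" "blk mu' i < blk mu' j"
    then show "B $$ (i, j) = 0" using A[rule_format, of i j] B D by (simp add: blk_mu_init)
  qed
next
  assume zB: ?B
  show ?A
  proof (intro allI impI)
    fix i j assume ij: "i < k + a" "j < k + a" and lt: "blk (mu' @ [a]) i < blk (mu' @ [a]) j"
    consider "i < k" "j < k" | "i < k" "k \<le> j" | "k \<le> i" by linarith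
    then show "four_block_mat B (0\<^sub>m k a) C D $$ (i, j) = 0"
    proof cases
      case 1 then show ?thesis using zB lt B D by (simp add: blk_mu_init)
    next
      case 2 then show ?thesis using ij B D by simp
    next
      case 3 then show ?thesis using ij lt blk_mu_le_length[of j] by (simp add: blk_mu_last)
    qed
  qed
qed

lemma four_block_mem_parabolic_mix_iff:
  assumes B: "B \<in> carrier_mat k k" and C: "C \<in> carrier_mat a k" and D: "D \<in> carrier_mat a a"
  shows "four_block_mat B (0\<^sub>m k a) C D \<in> parabolic_mix (la' @ [L]) (mu' @ [a])
    \<longleftrightarrow> B \<in> parabolic_mix la_tilde mu' \<and> C \<in> lower_left_blocks \<and> D \<in> GL2 a"
  unfolding parabolic_mix_iff[OF sum_list_snoc] parabolic_mix_iff[OF sum_list_la_tilde k_def[symmetric]]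
    GL2_iff four_block_parabolic_zeros_iff[OF assms] four_block_parabolic_t_zeros_iff[OF assms]
    det_four_block_mat_zero_upper_right_nonzero_iff[OF assms]
  using assms by auto

lemma parabolic_mix_eq_image:
  "parabolic_mix (la' @ [L]) (mu' @ [a])
     = block_lower_triangular ` (parabolic_mix la_tilde mu' \<times> lower_left_blocks \<times> GL2 a)"
proof (intro equalityI subsetI)
  fix A assume A: "A \<in> parabolic_mix (la' @ [L]) (mu' @ [a])"
  have carrier: "A \<in> carrier_mat (k + a) (k + a)"
    using A parabolic_mix_subset_carrier[of "la' @ [L]" "mu' @ [a]"] sum_list_snoc(1) by auto
  have "A $$ (i, k + j) = 0" if "i < k" "j < a" for i j
    using A that blk_mu_init[of i] blk_mu_last[of "k + j"] blk_less_length[of i mu']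
    unfolding parabolic_mix_iff[OF sum_list_snoc] k_def by simp
  then obtain B C D where carriers: "B \<in> carrier_mat k k" "C \<in> carrier_mat a k" "D \<in> carrier_mat a a"
    and A_eq: "A = four_block_mat B (0\<^sub>m k a) C D"
    using four_block_mat_zero_upper_right_cases[OF carrier] by metis
  moreover have "B \<in> parabolic_mix la_tilde mu'" "C \<in> lower_left_blocks" "D \<in> GL2 a"
    using A four_block_mem_parabolic_mix_iff[OF carriers] unfolding A_eq by blast+
  ultimately show "A \<in> block_lower_triangular ` (parabolic_mix la_tilde mu' \<times> lower_left_blocks \<times> GL2 a)"
    by (auto intro!: image_eqI[where x = "(B, C, D)"])
next
  fix A assume "A \<in> block_lower_triangular ` (parabolic_mix la_tilde mu' \<times> lower_left_blocks \<times> GL2 a)"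
  then obtain B C D where mem: "B \<in> parabolic_mix la_tilde mu'" "C \<in> lower_left_blocks" "D \<in> GL2 a"
    and A_eq: "A = four_block_mat B (0\<^sub>m k a) C D"
    by auto
  then have "B \<in> carrier_mat k k" "C \<in> carrier_mat a k" "D \<in> carrier_mat a a"
    using parabolic_mix_subset_carrier[of la_tilde mu'] sum_list_la_tilde
    unfolding lower_left_blocks_def GL2_def by auto
  then show "A \<in> parabolic_mix (la' @ [L]) (mu' @ [a])"
    using mem A_eq four_block_mem_parabolic_mix_iff by blast
qed

lemma card_lower_left_blocks: "card lower_left_blocks = 2 ^ (a * (L - a))"
proof -
  have "card lower_left_blocks = card (UNIV :: bit set) ^ (a * (k - sum_list la'))"
    unfolding lower_left_blocks_def by (rule card_mat_zero_left_cols[OF sum_list_la'_le])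
  moreover have "k - sum_list la' = L - a" using sum_list_eq unfolding k_def by simp
  ultimately show ?thesis by (simp add: card_UNIV_bit)
qed

lemma card_parabolic_mix:
  "card (parabolic_mix (la' @ [L]) (mu' @ [a]))
     = 2 ^ (a * (L - a)) * card (GL2 a) * card (parabolic_mix la_tilde mu')"
proof -
  have "parabolic_mix la_tilde mu' \<times> lower_left_blocks \<times> GL2 a
      \<subseteq> carrier_mat k k \<times> carrier_mat a k \<times> carrier_mat a a"
    using parabolic_mix_subset_carrier[of la_tilde mu'] sum_list_la_tilde
    unfolding lower_left_blocks_def GL2_def by auto
  then have "inj_on block_lower_triangular (parabolic_mix la_tilde mu' \<times> lower_left_blocks \<times> GL2 a)"
    by (rule inj_on_subset[OF inj_on_four_block_mat_zero_upper_right])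
  then show ?thesis
    unfolding parabolic_mix_eq_image
    by (simp add: card_image card_cartesian_product card_lower_left_blocks)
qed

end

theorem proposition1:
  fixes n :: nat and la mu :: "nat list"
  assumes "is_decomp n la" and "is_decomp n mu"
    and "la \<noteq> []" and "mu \<noteq> []"
    and "last mu \<le> last la"
  shows "card (parabolic_mix la mu) =
    2 ^ (last mu * (last la - last mu)) * card (GL2 (last mu)) *
    card (parabolic_mix (filter (\<lambda>x. 0 < x) (butlast la @ [last la - last mu])) (butlast mu))"
proof -
  obtain la' L where la: "la = la' @ [L]" using assms(3) by (metis append_butlast_last_id)
  obtain mu' a where mu: "mu = mu' @ [a]" using assms(4) by (metis append_butlast_last_id)
  interpret last_block_split la' mu' L a
  proof
    show "\<forall>x\<in>set la'. 0 < x" using assms(1) la unfolding is_decomp_def by simp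
    show "a \<le> L" using assms(5) la mu by simp
    show "sum_list la' + L = sum_list mu' + a" using assms(1,2) la mu unfolding is_decomp_def by simp
  qed
  show ?thesis using card_parabolic_mix unfolding la_tilde_def by (simp add: la mu)
qed

end
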